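(* Let $A$ be a vertex of a phylogenetic quiver $\mathcal O$, let $B$ be a vertex of the clade $\mathcal O_A$, and set $m=h(A)$, $n=h(B)$ (so $n\ge m$). If $p^{n-m}([B])=[A]$, then $B$ is a phylogenetic vertex of $\mathcal O_A$ and $h_A(B)=n-m$.
   Context: A quiver consists of a class of vertices and, for each ordered pair of vertices $(A,B)$, a set of edges $A\to B$ (loops and multiple edges allowed). An evolution of length $m\ge 0$ is a sequence $A_0\leftarrow A_1\leftarrow\cdots\leftarrow A_m$ of vertices together with edges $A_k\to A_{k-1}$ ($1\le k\le m$); $A_0$ is its initial and $A_m$ its terminal vertex. Write $A\le B$ ($A$ is an ancestor of $B$, $B$ a descendant of $A$) if there is an evolution with initial vertex $A$ and terminal vertex $B$; $A,B$ are isotypic ($A\sim B$) if $A\le B$ and $B\le A$. A vertex $A$ is primitive if every ancestor of $A$ is isotypic to $A$. A full evolution for $X$ is an evolution with primitive initial vertex and terminal vertex $X$. The height $h(X)$ is the smallest length of a full evolution for $X$ ($\infty$ if none). An evolution $\alpha=(A_0\leftarrow\cdots\leftarrow A_m)$ embeds in $\beta=(B_0\leftarrow\cdots\leftarrow B_n)$ if $m\le n$ and there are $0\le r_0<\cdots<r_m\le n$ with $A_k\sim B_{r_k}$. A universal evolution for $X$ is a full evolution for $X$ embedding in every full evolution for $X$; $X$ is phylogenetic if one exists. A quiver is monotonous if $h(A)\ge h(B)$ for every edge $A\to B$; small if its isotypy classes form a set; phylogenetic if small, monotonous, and all vertices phylogenetic. For a phylogenetic quiver, $[A]$ denotes the isotypy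 class of $A$, $\mathcal O_m$ the set of isotypy classes of vertices of height $m$, and for $m\ge1$ the parental map $p:\mathcal O_m\to\mathcal O_{m-1}$ is $p([A])=[A_{m-1}]$ where $A_0\leftarrow\cdots\leftarrow A_{m-1}\leftarrow A_m=A$ is any universal evolution for $A$ (well defined); $p^0$ is the identity. The clade $\mathcal O_A$ is the quiver formed by all descendants of $A$ in $\mathcal O$ and all edges between them; $h_A$ denotes height computed in $\mathcal O_A$, and phylogeneticity in $\mathcal O_A$ is likewise computed within $\mathcal O_A$. *)

theory Defs
  imports Main "HOL-Library.Extended_Nat"
begin

text \<open>A quiver is given by a vertex set V and an edge relation E (E a b means: there is
  at least one edge a \<rightarrow> b).\<close>

definition evol :: "'v set \<Rightarrow> ('v \<Rightarrow> 'v \<Rightarrow> bool) \<Rightarrow> 'v list \<Rightarrow> bool" where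
  "evol V E xs \<longleftrightarrow> xs \<noteq> [] \<and> set xs \<subseteq> V \<and>
     (\<forall>k. 0 < k \<and> k < length xs \<longrightarrow> E (xs ! k) (xs ! (k - 1)))"

definition evol_len :: "'v list \<Rightarrow> nat" where
  "evol_len xs = length xs - 1"

definition anc :: "'v set \<Rightarrow> ('v \<Rightarrow> 'v \<Rightarrow> bool) \<Rightarrow> 'v \<Rightarrow> 'v \<Rightarrow> bool" where
  "anc V E a b \<longleftrightarrow> (\<exists>xs. evol V E xs \<and> hd xs = a \<and> last xs = b)"

definition iso :: "'v set \<Rightarrow> ('v \<Rightarrow> 'v \<Rightarrow> bool) \<Rightarrow> 'v \<Rightarrow> 'v \<Rightarrow> bool" where
  "iso V E a b \<longleftrightarrow> anc V E a b \<and> anc V E b a"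

definition primitive :: "'v set \<Rightarrow> ('v \<Rightarrow> 'v \<Rightarrow> bool) \<Rightarrow> 'v \<Rightarrow> bool" where
  "primitive V E a \<longleftrightarrow> a \<in> V \<and> (\<forall>b. anc V E b a \<longrightarrow> iso V E b a)"

definition full_evol :: "'v set \<Rightarrow> ('v \<Rightarrow> 'v \<Rightarrow> bool) \<Rightarrow> 'v list \<Rightarrow> 'v \<Rightarrow> bool" where
  "full_evol V E xs x \<longleftrightarrow> evol V E xs \<and> primitive V E (hd xs) \<and> last xs = x"

text \<open>Height: least length of a full evolution; infinity if none (Inf of the empty set).\<close>
definition height :: "'v set \<Rightarrow> ('v \<Rightarrow> 'v \<Rightarrow> bool) \<Rightarrow> 'v \<Rightarrow> enat" where
  "height V E x = (INF xs \<in> {xs. full_evol V E xs x}. enat (evol_len xs))"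

definition embeds :: "'v set \<Rightarrow> ('v \<Rightarrow> 'v \<Rightarrow> bool) \<Rightarrow> 'v list \<Rightarrow> 'v list \<Rightarrow> bool" where
  "embeds V E xs ys \<longleftrightarrow> length xs \<le> length ys \<and>
     (\<exists>r. strict_mono_on {..<length xs} r \<and>
          (\<forall>k < length xs. r k < length ys \<and> iso V E (xs ! k) (ys ! r k)))"

definition universal :: "'v set \<Rightarrow> ('v \<Rightarrow> 'v \<Rightarrow> bool) \<Rightarrow> 'v list \<Rightarrow> 'v \<Rightarrow> bool" where
  "universal V E xs x \<longleftrightarrow> full_evol V E xs x \<and>
     (\<forall>ys. full_evol V E ys x \<longrightarrow> embeds V E xs ys)"

definition phylo_vertex :: "'v set \<Rightarrow> ('v \<Rightarrow> 'v \<Rightarrow> bool) \<Rightarrow> 'v \<Rightarrow> bool" where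
  "phylo_vertex V E x \<longleftrightarrow> (\<exists>xs. universal V E xs x)"

definition monotonous :: "'v set \<Rightarrow> ('v \<Rightarrow> 'v \<Rightarrow> bool) \<Rightarrow> bool" where
  "monotonous V E \<longleftrightarrow> (\<forall>a\<in>V. \<forall>b\<in>V. E a b \<longrightarrow> height V E a \<ge> height V E b)"

text \<open>Smallness is automatic in HOL (isotypy classes are sets of a type).\<close>
definition phylo_quiver :: "'v set \<Rightarrow> ('v \<Rightarrow> 'v \<Rightarrow> bool) \<Rightarrow> bool" where
  "phylo_quiver V E \<longleftrightarrow> monotonous V E \<and> (\<forall>x\<in>V. phylo_vertex V E x)"

definition iso_class :: "'v set \<Rightarrow> ('v \<Rightarrow> 'v \<Rightarrow> bool) \<Rightarrow> 'v \<Rightarrow> 'v set" where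
  "iso_class V E a = {b. iso V E a b}"

text \<open>Parental map on isotypy classes: pick a representative a of the class and a universal
  evolution [A_0,...,A_m] for it, and return the class of A_(m-1) (well defined by the paper).\<close>
definition parent :: "'v set \<Rightarrow> ('v \<Rightarrow> 'v \<Rightarrow> bool) \<Rightarrow> 'v set \<Rightarrow> 'v set" where
  "parent V E C = (let (a, xs) = (SOME (a, xs). a \<in> C \<and> universal V E xs a)
                   in iso_class V E (xs ! (evol_len xs - 1)))"

definition clade_V :: "'v set \<Rightarrow> ('v \<Rightarrow> 'v \<Rightarrow> bool) \<Rightarrow> 'v \<Rightarrow> 'v set" where
  "clade_V V E a = {b. anc V E a b}"

definition clade_E :: "'v set \<Rightarrow> ('v \<Rightarrow> 'v \<Rightarrow> bool) \<Rightarrow> 'v \<Rightarrow> 'v \<Rightarrow> 'v \<Rightarrow> bool" where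
  "clade_E V E a x y \<longleftrightarrow> E x y \<and> x \<in> clade_V V E a \<and> y \<in> clade_V V E a"

end

theory Submission
  imports Defs
begin

text \<open>Take a universal evolution xs for B. Iterating the parental map walks back along xs, so
  its m-th vertex is isotypic to A, and the tail of xs from position m is a full evolution of B
  inside the clade of A. It is universal there: a full evolution cs of B in the clade starts at a
  vertex isotypic to A, so prefixing it by the first m steps of xs (and a path back to the start
  of cs) gives a full evolution of B in the whole quiver, into which xs embeds. Along a universal
  evolution the k-th vertex has height k, whereas every vertex of the prefix has height at most m;
  since isotypic vertices have equal heights, the tail of xs must embed into cs.\<close>

lemma evol_iff_successively:
  "evol V E xs \<longleftrightarrow> xs \<noteq> [] \<and> set xs \<subseteq> V \<and> successively (\<lambda>a b. E b a) xs"
  unfolding evol_def successively_conv_nth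
  by (metis Suc_pred diff_Suc_1 zero_less_Suc)

lemma last_append_tl:
  "xs \<noteq> [] \<Longrightarrow> ys \<noteq> [] \<Longrightarrow> last xs = hd ys \<Longrightarrow> last (xs @ tl ys) = last ys"
  by (cases ys) auto

lemma evol_append_tl:
  assumes "evol V E xs" "evol V E ys" "last xs = hd ys"
  shows "evol V E (xs @ tl ys)"
proof (cases ys)
  case (Cons y ys')
  then show ?thesis
    using assms by (auto simp: evol_iff_successively successively_append_iff successively_Cons)
qed (use assms in \<open>simp add: evol_def\<close>)

lemma evol_take: "evol V E xs \<Longrightarrow> 0 < k \<Longrightarrow> evol V E (take k xs)"
  unfolding evol_iff_successively
  by (metis append_take_drop_id set_take_subset successively_append_iff take_eq_Nil2
      bot_nat_0.not_eq_extremum order_trans)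

lemma evol_drop: "evol V E xs \<Longrightarrow> k < length xs \<Longrightarrow> evol V E (drop k xs)"
  unfolding evol_iff_successively
  by (metis append_take_drop_id drop_eq_Nil2 leD set_drop_subset successively_append_iff order_trans)

lemma evol_nth_mem: "evol V E xs \<Longrightarrow> k < length xs \<Longrightarrow> xs ! k \<in> V"
  unfolding evol_def by auto

lemma anc_nth:
  assumes "evol V E xs" "i \<le> j" "j < length xs"
  shows "anc V E (xs ! i) (xs ! j)"
proof -
  let ?ys = "take (Suc (j - i)) (drop i xs)"
  have "evol V E ?ys" using assms by (intro evol_take evol_drop) auto
  moreover have "hd ?ys = xs ! i" "last ?ys = xs ! j"
    using assms by (simp_all add: hd_drop_conv_nth last_conv_nth)
  ultimately show ?thesis unfolding anc_def by blast
qed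

lemma anc_hd_nth: "evol V E xs \<Longrightarrow> k < length xs \<Longrightarrow> anc V E (hd xs) (xs ! k)"
  using anc_nth[of V E xs 0 k] by (simp add: evol_def hd_conv_nth)

lemma anc_nth_last: "evol V E xs \<Longrightarrow> k < length xs \<Longrightarrow> anc V E (xs ! k) (last xs)"
  using anc_nth[of V E xs k "length xs - 1"] by (simp add: evol_def last_conv_nth)

lemma anc_refl: "a \<in> V \<Longrightarrow> anc V E a a"
  unfolding anc_def evol_def by (intro exI[of _ "[a]"]) auto

lemma anc_mem: "anc V E a b \<Longrightarrow> a \<in> V \<and> b \<in> V"
  unfolding anc_def evol_def by auto

lemma anc_trans: "anc V E a b \<Longrightarrow> anc V E b c \<Longrightarrow> anc V E a c"
  unfolding anc_def
proof (elim exE conjE)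
  fix xs ys assume "evol V E xs" "hd xs = a" "last xs = b" "evol V E ys" "hd ys = b" "last ys = c"
  moreover from this have "xs \<noteq> []" "ys \<noteq> []" by (auto simp: evol_def)
  ultimately show "\<exists>zs. evol V E zs \<and> hd zs = a \<and> last zs = c"
    by (intro exI[of _ "xs @ tl ys"]) (simp add: evol_append_tl last_append_tl)
qed

lemma iso_refl: "a \<in> V \<Longrightarrow> iso V E a a"
  unfolding iso_def by (simp add: anc_refl)

lemma iso_sym: "iso V E a b \<Longrightarrow> iso V E b a"
  unfolding iso_def by simp

lemma iso_trans: "iso V E a b \<Longrightarrow> iso V E b c \<Longrightarrow> iso V E a c"
  unfolding iso_def by (blast intro: anc_trans)

lemma iso_class_eq_iff: "b \<in> V \<Longrightarrow> iso_class V E a = iso_class V E b \<longleftrightarrow> iso V E a b"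
  unfolding iso_class_def by (blast intro: iso_refl iso_sym iso_trans)

lemma full_evol_append_tl:
  assumes "full_evol V E xs a" "evol V E ys" "hd ys = a"
  shows "full_evol V E (xs @ tl ys) (last ys)"
  using assms evol_append_tl[of V E xs ys]
  by (auto simp: full_evol_def evol_def last_append_tl)

lemma full_evol_take:
  assumes "full_evol V E xs x" "k < length xs"
  shows "full_evol V E (take (Suc k) xs) (xs ! k)"
  using assms evol_take[of V E xs "Suc k"] by (auto simp: full_evol_def evol_def last_conv_nth)

lemma full_evol_append_tl_drop:
  assumes "full_evol V E ys (xs ! k)" "full_evol V E xs x" "k < length xs"
  shows "full_evol V E (ys @ tl (drop k xs)) x"
  using full_evol_append_tl[OF assms(1), of "drop k xs"] evol_drop[of V E xs k] assms(2,3)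
  by (simp add: full_evol_def hd_drop_conv_nth)

lemma height_le_evol_len: "full_evol V E xs x \<Longrightarrow> height V E x \<le> enat (evol_len xs)"
  unfolding height_def by (rule INF_lower) simp

lemma le_height: "(\<And>ys. full_evol V E ys x \<Longrightarrow> k \<le> evol_len ys) \<Longrightarrow> enat k \<le> height V E x"
  unfolding height_def by (rule INF_greatest) simp

lemma monotonous_height_hd_le_last:
  assumes "monotonous V E" "evol V E xs"
  shows "height V E (hd xs) \<le> height V E (last xs)"
  using assms(2)
proof (induction xs rule: induct_list012)
  case (3 x y zs)
  then have "evol V E (y # zs)" "E y x" "x \<in> V" "y \<in> V"
    by (auto simp: evol_iff_successively)
  with 3 assms(1) show ?case
    unfolding monotonous_def by (metis last_ConsR list.sel(1) list.simps(3) order_trans)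
qed (simp_all add: evol_def)

lemma monotonous_anc_height: "monotonous V E \<Longrightarrow> anc V E a b \<Longrightarrow> height V E a \<le> height V E b"
  unfolding anc_def using monotonous_height_hd_le_last by blast

lemma monotonous_iso_height: "monotonous V E \<Longrightarrow> iso V E a b \<Longrightarrow> height V E a = height V E b"
  unfolding iso_def by (meson monotonous_anc_height order_antisym)

lemma monotonous_evol_nth_height:
  assumes "monotonous V E" "evol V E xs" "height V E (hd xs) = h" "height V E (last xs) = h"
    and "k < length xs"
  shows "height V E (xs ! k) = h"
  using monotonous_anc_height[OF assms(1) anc_hd_nth[OF assms(2,5)]]
    monotonous_anc_height[OF assms(1) anc_nth_last[OF assms(2,5)]] assms(3,4)
  by simp

lemma strict_mono_on_lessThan_ge_self:
  fixes r :: "nat \<Rightarrow> nat"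
  assumes "strict_mono_on {..<N} r" "k < N"
  shows "k \<le> r k"
  using assms(2)
proof (induction k)
  case (Suc k)
  then have "r k < r (Suc k)" using strict_mono_onD[OF assms(1)] by simp
  with Suc show ?case by simp
qed simp

lemma embedsI:
  assumes "strict_mono_on {..<length xs} r"
    and "\<And>k. k < length xs \<Longrightarrow> r k < length ys \<and> iso V E (xs ! k) (ys ! r k)"
  shows "embeds V E xs ys"
proof -
  have "length xs \<le> length ys"
  proof (cases xs rule: rev_cases)
    case (snoc xs' x)
    then have "length xs' \<le> r (length xs')" "r (length xs') < length ys"
      using assms strict_mono_on_lessThan_ge_self[OF assms(1)] by auto
    with snoc show ?thesis by simp
  qed simp
  with assms show ?thesis unfolding embeds_def by blast
qed

lemma embeds_length: "embeds V E xs ys \<Longrightarrow> length xs \<le> length ys"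
  unfolding embeds_def by simp

lemma embeds_take: "embeds V E xs ys \<Longrightarrow> embeds V E (take j xs) ys"
  unfolding embeds_def by (fastforce elim!: monotone_on_subset)

lemma embeds_drop:
  assumes "embeds V E xs ys"
  shows "embeds V E (drop j xs) ys"
proof -
  obtain r where r: "strict_mono_on {..<length xs} r"
    "\<And>k. k < length xs \<Longrightarrow> r k < length ys \<and> iso V E (xs ! k) (ys ! r k)"
    using assms unfolding embeds_def by blast
  have "strict_mono_on {..<length (drop j xs)} (\<lambda>k. r (j + k))"
    by (rule strict_mono_onI) (auto intro: strict_mono_onD[OF r(1)])
  then show ?thesis by (rule embedsI) (use r(2) in auto)
qed

lemma embeds_append_left:
  assumes "embeds V E xs (ys @ zs)"
    and "\<And>k j. k < length xs \<Longrightarrow> j < length zs \<Longrightarrow> \<not> iso V E (xs ! k) (zs ! j)"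
  shows "embeds V E xs ys"
proof -
  obtain r where r: "strict_mono_on {..<length xs} r"
    "\<And>k. k < length xs \<Longrightarrow> r k < length (ys @ zs) \<and> iso V E (xs ! k) ((ys @ zs) ! r k)"
    using assms(1) unfolding embeds_def by blast
  have "r k < length ys \<and> iso V E (xs ! k) (ys ! r k)" if k: "k < length xs" for k
  proof -
    have "r k < length ys"
    proof (rule ccontr)
      assume "\<not> r k < length ys"
      then have "r k - length ys < length zs" "iso V E (xs ! k) (zs ! (r k - length ys))"
        using r(2)[OF k] by (auto simp: nth_append)
      with assms(2)[OF k] show False by blast
    qed
    with r(2)[OF k] show ?thesis by (simp add: nth_append)
  qed
  with r(1) show ?thesis by (rule embedsI)
qed

lemma embeds_append_tl_right:
  assumes "embeds V E xs (ys @ tl zs)" "xs \<noteq> []" "zs \<noteq> []" "iso V E (hd xs) (hd zs)"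
    and "\<And>k j. 0 < k \<Longrightarrow> k < length xs \<Longrightarrow> j < length ys \<Longrightarrow> \<not> iso V E (xs ! k) (ys ! j)"
  shows "embeds V E xs zs"
proof -
  obtain r where r: "strict_mono_on {..<length xs} r"
    "\<And>k. k < length xs \<Longrightarrow> r k < length (ys @ tl zs) \<and> iso V E (xs ! k) ((ys @ tl zs) ! r k)"
    using assms(1) unfolding embeds_def by blast
  have past_ys: "length ys \<le> r k" if "0 < k" "k < length xs" for k
    using r(2)[OF that(2)] assms(5)[OF that] by (cases "r k < length ys") (auto simp: nth_append)
  define r' where "r' k = (if k = 0 then 0 else Suc (r k - length ys))" for k
  have "strict_mono_on {..<length xs} r'"
  proof (rule strict_mono_onI)
    fix j k assume "j \<in> {..<length xs}" "k \<in> {..<length xs}" "j < k"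
    with past_ys[of j] past_ys[of k] strict_mono_onD[OF r(1)] show "r' j < r' k"
      unfolding r'_def by (auto intro: diff_less_mono)
  qed
  moreover have "r' k < length zs \<and> iso V E (xs ! k) (zs ! r' k)" if "k < length xs" for k
    using r(2)[OF that] past_ys[OF _ that] assms(2-4)
    by (cases "k = 0") (auto simp: r'_def nth_append nth_tl hd_conv_nth)
  ultimately show ?thesis by (rule embedsI)
qed

lemma embeds_nth_iso:
  assumes "monotonous V E" "embeds V E xs ys"
    and "\<And>k. k < length xs \<Longrightarrow> height V E (xs ! k) = enat k"
    and "\<And>k. k < length ys \<Longrightarrow> height V E (ys ! k) = enat k"
    and "k < length xs"
  shows "iso V E (xs ! k) (ys ! k)"
proof -
  obtain r where "r k < length ys" "iso V E (xs ! k) (ys ! r k)"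
    using assms(2,5) unfolding embeds_def by blast
  moreover from this have "r k = k"
    using monotonous_iso_height[OF assms(1)] assms(3-5) by fastforce
  ultimately show ?thesis by simp
qed

lemma universal_height:
  assumes "universal V E xs x"
  shows "height V E x = enat (evol_len xs)"
proof (rule order_antisym)
  show "height V E x \<le> enat (evol_len xs)"
    using assms unfolding universal_def by (blast intro: height_le_evol_len)
  show "enat (evol_len xs) \<le> height V E x"
  proof (rule le_height)
    fix ys assume "full_evol V E ys x"
    then have "length xs \<le> length ys" using assms by (auto simp: universal_def dest: embeds_length)
    then show "evol_len xs \<le> evol_len ys" by (simp add: evol_len_def diff_le_mono)
  qed
qed

lemma universal_nth_height:
  assumes u: "universal V E xs x" and k: "k < length xs"
  shows "height V E (xs ! k) = enat k"
proof (rule order_antisym)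
  have f: "full_evol V E xs x" using u unfolding universal_def by simp
  show "height V E (xs ! k) \<le> enat k"
    using height_le_evol_len[OF full_evol_take[OF f k]] k by (simp add: evol_len_def)
  show "enat k \<le> height V E (xs ! k)"
  proof (rule le_height)
    fix ys assume "full_evol V E ys (xs ! k)"
    then have "full_evol V E (ys @ tl (drop k xs)) x" using f k by (rule full_evol_append_tl_drop)
    then have "length xs \<le> length (ys @ tl (drop k xs))"
      using u unfolding universal_def by (blast dest: embeds_length)
    with k show "k \<le> evol_len ys" by (simp add: evol_len_def)
  qed
qed

lemma universal_take:
  assumes mono: "monotonous V E" and u: "universal V E xs x" and k: "k < length xs"
  shows "universal V E (take (Suc k) xs) (xs ! k)"
  unfolding universal_def
proof (intro conjI allI impI)
  have f: "full_evol V E xs x" using u unfolding universal_def by simp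
  show "full_evol V E (take (Suc k) xs) (xs ! k)" using full_evol_take[OF f k] .
  fix ys assume "full_evol V E ys (xs ! k)"
  then have "full_evol V E (ys @ tl (drop k xs)) x" using f k by (rule full_evol_append_tl_drop)
  then have "embeds V E (take (Suc k) xs) (ys @ tl (drop k xs))"
    using u unfolding universal_def by (blast intro: embeds_take)
  moreover have "\<not> iso V E (take (Suc k) xs ! i) (tl (drop k xs) ! j)"
    if "i < length (take (Suc k) xs)" "j < length (tl (drop k xs))" for i j
    using that monotonous_iso_height[OF mono, of "xs ! i" "xs ! Suc (k + j)"]
      universal_nth_height[OF u, of i] universal_nth_height[OF u, of "Suc (k + j)"]
    by (auto simp: nth_tl)
  ultimately show "embeds V E (take (Suc k) xs) ys" by (rule embeds_append_left)
qed

lemma universal_nth_iso: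
  assumes mono: "monotonous V E" and u: "universal V E xs x" and v: "universal V E ys y"
    and xy: "iso V E y x" and k: "k < length xs"
  shows "iso V E (xs ! k) (ys ! k)"
proof -
  define n where "n = evol_len xs"
  have hx: "height V E x = enat n" using universal_height[OF u] by (simp add: n_def)
  have hy: "height V E y = enat n" using monotonous_iso_height[OF mono xy] hx by simp
  have fx: "full_evol V E xs x" and fy: "full_evol V E ys y"
    using u v unfolding universal_def by simp_all
  then have ne: "xs \<noteq> []" "ys \<noteq> []" by (auto simp: full_evol_def evol_def)
  then have len: "length xs = Suc n" "length ys = Suc n"
    using universal_height[OF v] hy by (auto simp: n_def evol_len_def neq_Nil_conv)
  show ?thesis
  proof (cases "k = n")
    case True
    then show ?thesis using fx fy ne len xy by (simp add: full_evol_def last_conv_nth iso_sym)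
  next
    case False
    obtain ps where ps: "evol V E ps" "hd ps = y" "last ps = x"
      using xy unfolding iso_def anc_def by blast
    have "full_evol V E (ys @ tl ps) x" using full_evol_append_tl[OF fy ps(1,2)] ps(3) by simp
    then have "embeds V E (take n xs) (ys @ tl ps)"
      using u unfolding universal_def by (blast intro: embeds_take)
    moreover have "\<not> iso V E (take n xs ! i) (tl ps ! j)"
      if i: "i < length (take n xs)" and j: "j < length (tl ps)" for i j
    proof
      have "height V E (ps ! Suc j) = enat n"
        using monotonous_evol_nth_height[OF mono ps(1)] ps(2,3) hx hy j by simp
      moreover assume "iso V E (take n xs ! i) (tl ps ! j)"
      ultimately have "height V E (xs ! i) = enat n"
        using monotonous_iso_height[OF mono] i j by (simp add: nth_tl)
      with universal_nth_height[OF u, of i] i len show False by simp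
    qed
    ultimately have "embeds V E (take n xs) ys" by (rule embeds_append_left)
    then show ?thesis
      using embeds_nth_iso[OF mono, of "take n xs" ys k] universal_nth_height[OF u]
        universal_nth_height[OF v] len k False
      by simp
  qed
qed

lemma parent_iso_class:
  assumes "phylo_quiver V E" "c \<in> V"
  obtains a ys where "iso V E c a" "universal V E ys a"
    "parent V E (iso_class V E c) = iso_class V E (ys ! (evol_len ys - 1))"
proof -
  obtain us where "universal V E us c"
    using assms unfolding phylo_quiver_def phylo_vertex_def by blast
  then have "\<exists>p. case p of (a, ys) \<Rightarrow> a \<in> iso_class V E c \<and> universal V E ys a"
    using iso_refl[OF assms(2)] by (auto simp: iso_class_def)
  then obtain a ys where "(SOME (a, ys). a \<in> iso_class V E c \<and> universal V E ys a) = (a, ys)"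
    "a \<in> iso_class V E c" "universal V E ys a"
    by (metis (mono_tags, lifting) case_prod_beta prod.collapse someI_ex)
  with that show ?thesis unfolding parent_def iso_class_def by simp
qed

lemma parent_iso_class_nth:
  assumes pq: "phylo_quiver V E" and u: "universal V E xs x" and i: "0 < i" "i < length xs"
  shows "parent V E (iso_class V E (xs ! i)) = iso_class V E (xs ! (i - 1))"
proof -
  have mono: "monotonous V E" using pq unfolding phylo_quiver_def by simp
  have ev: "evol V E xs" using u unfolding universal_def full_evol_def by simp
  obtain a ys where ca: "iso V E (xs ! i) a" and v: "universal V E ys a"
    and par: "parent V E (iso_class V E (xs ! i)) = iso_class V E (ys ! (evol_len ys - 1))"
    using parent_iso_class[OF pq evol_nth_mem[OF ev i(2)]] .
  have "enat (evol_len ys) = enat i"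
    using universal_height[OF v] monotonous_iso_height[OF mono ca] universal_nth_height[OF u i(2)]
    by simp
  then have len: "evol_len ys = i" by simp
  have "iso V E (take (Suc i) xs ! (i - 1)) (ys ! (i - 1))"
    using universal_nth_iso[OF mono universal_take[OF mono u i(2)] v iso_sym[OF ca]] i by simp
  then have "iso V E (xs ! (i - 1)) (ys ! (i - 1))" using i by simp
  then show ?thesis
    using par len evol_nth_mem[OF ev, of "i - 1"] i
    by (metis iso_class_eq_iff iso_sym less_imp_diff_less)
qed

lemma parent_funpow_iso_class:
  assumes pq: "phylo_quiver V E" and u: "universal V E xs x" and j: "j \<le> evol_len xs"
  shows "(parent V E ^^ j) (iso_class V E x) = iso_class V E (xs ! (evol_len xs - j))"
  using j
proof (induction j)
  case 0
  have "xs \<noteq> []" "last xs = x" using u unfolding universal_def full_evol_def evol_def by auto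
  then show ?case by (simp add: evol_len_def last_conv_nth)
next
  case (Suc j)
  have "xs \<noteq> []" using u unfolding universal_def full_evol_def evol_def by auto
  with Suc parent_iso_class_nth[OF pq u, of "evol_len xs - j"] show ?case
    by (simp add: evol_len_def)
qed

lemma evol_clade_iff:
  "evol (clade_V V E A) (clade_E V E A) xs \<longleftrightarrow> evol V E xs \<and> anc V E A (hd xs)"
proof
  assume ev: "evol (clade_V V E A) (clade_E V E A) xs"
  then have "set xs \<subseteq> V"
    unfolding evol_def clade_V_def using anc_mem by fast
  with ev have "evol V E xs"
    unfolding evol_iff_successively by (auto elim!: successively_mono simp: clade_E_def)
  moreover have "anc V E A (hd xs)"
    using ev unfolding evol_def clade_V_def by (metis hd_in_set mem_Collect_eq subsetD)
  ultimately show "evol V E xs \<and> anc V E A (hd xs)" ..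
next
  assume "evol V E xs \<and> anc V E A (hd xs)"
  then have ev: "evol V E xs" and A: "anc V E A (hd xs)" by simp_all
  have "set xs \<subseteq> clade_V V E A"
    using anc_trans[OF A anc_hd_nth[OF ev]] unfolding clade_V_def by (auto simp: in_set_conv_nth)
  with ev show "evol (clade_V V E A) (clade_E V E A) xs"
    unfolding evol_iff_successively by (auto elim!: successively_mono simp: clade_E_def)
qed

lemma anc_clade_iff: "anc (clade_V V E A) (clade_E V E A) x y \<longleftrightarrow> anc V E x y \<and> anc V E A x"
  unfolding anc_def evol_clade_iff by auto

lemma iso_clade_iff: "iso (clade_V V E A) (clade_E V E A) x y \<longleftrightarrow> iso V E x y \<and> anc V E A x"
  unfolding iso_def anc_clade_iff by (blast intro: anc_trans)

lemma primitive_clade_if_iso: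
  assumes "iso V E A c"
  shows "primitive (clade_V V E A) (clade_E V E A) c"
  using assms unfolding primitive_def iso_clade_iff anc_clade_iff
  by (auto simp: clade_V_def iso_def intro: anc_trans)

lemma embeds_clade:
  assumes "embeds V E xs ys" "\<forall>x \<in> set xs. anc V E A x"
  shows "embeds (clade_V V E A) (clade_E V E A) xs ys"
  using assms unfolding embeds_def iso_clade_iff by auto

lemma universal_drop_embeds:
  assumes mono: "monotonous V E" and u: "universal V E xs x" and m: "m < length xs"
    and cs: "evol V E cs" "last cs = x" and x_cs: "iso V E (xs ! m) (hd cs)"
  shows "embeds V E (drop m xs) cs"
proof -
  have f: "full_evol V E xs x" using u unfolding universal_def by simp
  have h_cs: "height V E (hd cs) = enat m"
    using monotonous_iso_height[OF mono x_cs] universal_nth_height[OF u m] by simp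
  obtain ps where ps: "evol V E ps" "hd ps = xs ! m" "last ps = hd cs"
    using x_cs unfolding iso_def anc_def by blast
  define ws where "ws = take (Suc m) xs @ tl ps"
  have fw: "full_evol V E ws (hd cs)"
    using full_evol_append_tl[OF full_evol_take[OF f m] ps(1,2)] ps(3) by (simp add: ws_def)
  have "full_evol V E (ws @ tl cs) x"
    using full_evol_append_tl[OF fw cs(1) refl] cs(2) by simp
  then have "embeds V E (drop m xs) (ws @ tl cs)"
    using u unfolding universal_def by (blast intro: embeds_drop)
  moreover have "\<not> iso V E (drop m xs ! k) (ws ! j)"
    if k: "0 < k" "k < length (drop m xs)" and j: "j < length ws" for k j
  proof
    have "height V E (ws ! j) \<le> enat m"
      using monotonous_anc_height[OF mono anc_nth_last[OF _ j]] fw h_cs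
      by (simp add: full_evol_def)
    moreover assume "iso V E (drop m xs ! k) (ws ! j)"
    then have "height V E (ws ! j) = enat (m + k)"
      using monotonous_iso_height[OF mono] universal_nth_height[OF u, of "m + k"] k by simp
    ultimately show False using k by simp
  qed
  ultimately show ?thesis
    using embeds_append_tl_right[of V E "drop m xs" ws cs] m cs(1) x_cs
    by (simp add: evol_def hd_drop_conv_nth)
qed

lemma universal_drop_in_clade:
  assumes mono: "monotonous V E" and u: "universal V E xs B" and m: "m < length xs"
    and xA: "iso V E (xs ! m) A"
  shows "universal (clade_V V E A) (clade_E V E A) (drop m xs) B"
  unfolding universal_def
proof (intro conjI allI impI)
  have f: "full_evol V E xs B" using u unfolding universal_def by simp
  have ev_drop: "evol V E (drop m xs)" and hd_drop: "hd (drop m xs) = xs ! m"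
    using f m evol_drop by (auto simp: full_evol_def hd_drop_conv_nth)
  have Ax: "anc V E A (xs ! m)" using xA unfolding iso_def by simp
  show "full_evol (clade_V V E A) (clade_E V E A) (drop m xs) B"
    using ev_drop hd_drop Ax primitive_clade_if_iso[OF iso_sym[OF xA]] f m
    by (simp add: full_evol_def evol_clade_iff)
  fix cs assume fc: "full_evol (clade_V V E A) (clade_E V E A) cs B"
  then have ev_cs: "evol V E cs" and Ac: "anc V E A (hd cs)" and lc: "last cs = B"
    by (simp_all add: full_evol_def evol_clade_iff)
  have "anc (clade_V V E A) (clade_E V E A) A (hd cs)"
    using Ac anc_refl[of A V E] anc_mem[OF Ac] by (simp add: anc_clade_iff)
  then have "iso V E A (hd cs)"
    using fc by (auto simp: full_evol_def primitive_def iso_clade_iff dest: iso_sym)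
  then have "embeds V E (drop m xs) cs"
    using universal_drop_embeds[OF mono u m ev_cs lc] iso_trans[OF xA] by blast
  moreover have "\<forall>y \<in> set (drop m xs). anc V E A y"
    using anc_trans[OF Ax] anc_hd_nth[OF ev_drop] hd_drop by (auto simp: in_set_conv_nth)
  ultimately show "embeds (clade_V V E A) (clade_E V E A) (drop m xs) cs"
    by (rule embeds_clade)
qed

theorem lemma9p5:
  fixes V :: "'v set" and E :: "'v \<Rightarrow> 'v \<Rightarrow> bool" and A B :: 'v and m n :: nat
  assumes "phylo_quiver V E"
    and "A \<in> V"
    and "B \<in> clade_V V E A"
    and "height V E A = enat m"
    and "height V E B = enat n"
    and "(parent V E ^^ (n - m)) (iso_class V E B) = iso_class V E A"
  shows "phylo_vertex (clade_V V E A) (clade_E V E A) B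
         \<and> height (clade_V V E A) (clade_E V E A) B = enat (n - m)"
proof -
  have mono: "monotonous V E" using assms(1) unfolding phylo_quiver_def by simp
  have AB: "anc V E A B" using assms(3) unfolding clade_V_def by simp
  obtain xs where u: "universal V E xs B"
    using assms(1) anc_mem[OF AB] unfolding phylo_quiver_def phylo_vertex_def by blast
  have len: "evol_len xs = n" "length xs = Suc n"
    using universal_height[OF u] assms(5) u
    by (auto simp: evol_len_def universal_def full_evol_def evol_def neq_Nil_conv)
  have mn: "m \<le> n" using monotonous_anc_height[OF mono AB] assms(4,5) by simp
  have "iso_class V E (xs ! m) = iso_class V E A"
    using parent_funpow_iso_class[OF assms(1) u, of "n - m"] len mn assms(6) by simp
  then have "iso V E (xs ! m) A" by (simp add: iso_class_eq_iff[OF assms(2)])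
  then have "universal (clade_V V E A) (clade_E V E A) (drop m xs) B"
    using universal_drop_in_clade[OF mono u] len mn by simp
  then show ?thesis
    using universal_height[of "clade_V V E A" "clade_E V E A" "drop m xs" B] len
    unfolding phylo_vertex_def by (auto simp: evol_len_def)
qed

end
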